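(* Let $q,d\in\mathbb{N}$, $\mathcal J$ a partition of $[qd]$, $\mathcal K$ a partition of $[d]$, and $A$ a real $d$-tensor. Then \[ \|A\circ 1_{L(\mathcal K)}\|_{\mathcal J}\le 2^{|\mathcal K|(|\mathcal K|-1)/2}\|A\|_{\mathcal J}. \]
   Context: For $d$-tensors $A,B$ indexed by $[n]^d$, $A\circ B=(a_{\mathbf i}b_{\mathbf i})_{\mathbf i}$ is the Hadamard product; for $C\subseteq[n]^d$, $1_C$ is the $d$-tensor with entries $1$ on $C$ and $0$ elsewhere. For $\mathcal K=\{K_1,\dots,K_a\}$ a partition of $[d]$, $L(\mathcal K)=\{\mathbf i\in[n]^d: i_k=i_l\iff \exists j: k,l\in K_j\}$. For an $m$-tensor $B$ and a partition $\mathcal J=\{J_1,\dots,J_k\}$ of $[m]$, $\|B\|_{\mathcal J}:=\sup\{\sum_{\mathbf i\in[n]^m}b_{\mathbf i}\prod_{l=1}^kx^{(l)}_{\mathbf i_{J_l}}:x^{(l)}\in\mathbb{R}^{[n]^{J_l}},\|x^{(l)}\|_2\le1\}$. For a $d$-tensor $A$, $e_q(A)$ is the $qd$-tensor with $(e_q(A))_{i_1\dots i_{qd}}=a_{i_1i_{q+1}\dots i_{(d-1)q+1}}$ if $i_{kq+j}=i_{kq+1}$ for all $k=0,\dots,d-1$, $j=2,\dots,q$, and $0$ otherwise; for a partition $\mathcal J$ of $[qd]$, $\|A\|_{\mathcal J}:=\|e_q(A)\|_{\mathcal J}$. *)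

theory Defs
  imports "HOL-Analysis.Analysis" "HOL-Library.Disjoint_Sets"
begin

text \<open>Conventions: coordinates are 0-based, so [m] is {..<m} and [n] is {..<n}.
  A multi-index in [n]^D (D a finite set of coordinates) is an extensional
  function in PiE D (\<lambda>_. {..<n}). A real tensor indexed by [n]^D is a function
  (nat \<Rightarrow> nat) \<Rightarrow> real, only its values on that index set matter.\<close>

definition idx :: "nat \<Rightarrow> nat set \<Rightarrow> (nat \<Rightarrow> nat) set" where
  "idx n D = PiE D (\<lambda>_. {..<n})"

definition hadamard :: "((nat \<Rightarrow> nat) \<Rightarrow> real) \<Rightarrow> ((nat \<Rightarrow> nat) \<Rightarrow> real) \<Rightarrow> (nat \<Rightarrow> nat) \<Rightarrow> real" where
  "hadamard A B = (\<lambda>i. A i * B i)"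

definition ind_tensor :: "(nat \<Rightarrow> nat) set \<Rightarrow> (nat \<Rightarrow> nat) \<Rightarrow> real" where
  "ind_tensor C = (\<lambda>i. if i \<in> C then 1 else 0)"

definition Lset :: "nat \<Rightarrow> nat \<Rightarrow> nat set set \<Rightarrow> (nat \<Rightarrow> nat) set" where
  "Lset n d K = {i \<in> idx n {..<d}. \<forall>k<d. \<forall>l<d. (i k = i l \<longleftrightarrow> (\<exists>B\<in>K. k \<in> B \<and> l \<in> B))}"

definition pnorm :: "nat \<Rightarrow> nat \<Rightarrow> nat set set \<Rightarrow> ((nat \<Rightarrow> nat) \<Rightarrow> real) \<Rightarrow> real" where
  "pnorm n m J B = Sup {(\<Sum>i\<in>idx n {..<m}. B i * (\<Prod>Jl\<in>J. x Jl (restrict i Jl))) | x.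
       \<forall>Jl\<in>J. (\<Sum>j\<in>idx n Jl. (x Jl j)\<^sup>2) \<le> 1}"

text \<open>e_q(A) for a d-tensor A: a (q d)-tensor (0-based positions k*q + j, j<q).\<close>
definition e_q :: "nat \<Rightarrow> nat \<Rightarrow> ((nat \<Rightarrow> nat) \<Rightarrow> real) \<Rightarrow> (nat \<Rightarrow> nat) \<Rightarrow> real" where
  "e_q q d A = (\<lambda>i. if (\<forall>k<d. \<forall>j<q. i (k*q + j) = i (k*q))
                      then A (\<lambda>k\<in>{..<d}. i (k*q)) else 0)"

definition qnorm :: "nat \<Rightarrow> nat \<Rightarrow> nat \<Rightarrow> nat set set \<Rightarrow> ((nat \<Rightarrow> nat) \<Rightarrow> real) \<Rightarrow> real" where
  "qnorm n q d J A = pnorm n (q*d) J (e_q q d A)"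

end

theory Submission
  imports Defs
begin

text \<open>The indicator of L(K) on the diagonal copy of A is an alternating sum over sets S of
  pairs of distinct blocks of K: each term forces the coordinates to agree inside every block and
  across the two blocks of every pair in S, and there are 2^(|K| choose 2) terms. So it suffices
  that multiplying a tensor by an indicator [i_u = i_v] never increases a partition norm. That
  follows by averaging over random sign vectors \<epsilon>: [a = b] is the mean of \<epsilon>_a \<epsilon>_b, and
  \<epsilon>_(i_u) \<epsilon>_(i_v) factors over the blocks of J into weights of modulus 1 that can be absorbed
  into the test vectors x.\<close>

definition admissible :: "nat \<Rightarrow> nat set set \<Rightarrow> (nat set \<Rightarrow> (nat \<Rightarrow> nat) \<Rightarrow> real) \<Rightarrow> bool" where
  "admissible n J x \<longleftrightarrow> (\<forall>Jl\<in>J. (\<Sum>j\<in>idx n Jl. (x Jl j)\<^sup>2) \<le> 1)"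

definition pform ::
    "nat \<Rightarrow> nat \<Rightarrow> nat set set \<Rightarrow> ((nat \<Rightarrow> nat) \<Rightarrow> real) \<Rightarrow> (nat set \<Rightarrow> (nat \<Rightarrow> nat) \<Rightarrow> real) \<Rightarrow> real"
  where "pform n m J B x = (\<Sum>i\<in>idx n {..<m}. B i * (\<Prod>Jl\<in>J. x Jl (restrict i Jl)))"

lemma pnorm_eq_Sup_pform: "pnorm n m J B = Sup {pform n m J B x | x. admissible n J x}"
  by (simp add: pnorm_def pform_def admissible_def)

lemma finite_idx: "finite D \<Longrightarrow> finite (idx n D)"
  by (simp add: idx_def finite_PiE)

lemma restrict_in_idx: "i \<in> idx n D \<Longrightarrow> D' \<subseteq> D \<Longrightarrow> restrict i D' \<in> idx n D'"
  by (auto simp: idx_def PiE_iff)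

lemma partition_on_block_subset: "partition_on A P \<Longrightarrow> X \<in> P \<Longrightarrow> X \<subseteq> A"
  by (metis Sup_upper partition_onD1)

lemma partition_on_block_unique:
  assumes "partition_on A P" "X \<in> P" "Y \<in> P" "u \<in> X" "u \<in> Y"
  shows "X = Y"
  using disjointD[OF partition_onD2[OF assms(1)] assms(2,3)] assms(4,5) by blast

lemma partition_on_lessThan_finite: "partition_on {..<(m::nat)} P \<Longrightarrow> finite P"
  using finite_elements by blast

lemma admissible_abs_le_1:
  assumes "admissible n J x" "Jl \<in> J" "finite Jl" "j \<in> idx n Jl"
  shows "\<bar>x Jl j\<bar> \<le> 1"
proof -
  have "(x Jl j)\<^sup>2 \<le> (\<Sum>j\<in>idx n Jl. (x Jl j)\<^sup>2)"
    by (rule member_le_sum) (use assms finite_idx in auto)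
  also have "\<dots> \<le> 1" using assms by (auto simp: admissible_def)
  finally show ?thesis by (simp add: abs_square_le_1)
qed

lemma pform_le_sum_abs:
  assumes "partition_on {..<m} J" "admissible n J x"
  shows "pform n m J B x \<le> (\<Sum>i\<in>idx n {..<m}. \<bar>B i\<bar>)"
  unfolding pform_def
proof (rule sum_mono)
  fix i assume i: "i \<in> idx n {..<m}"
  have "\<bar>x Jl (restrict i Jl)\<bar> \<le> 1" if "Jl \<in> J" for Jl
  proof -
    have "Jl \<subseteq> {..<m}" using partition_on_block_subset[OF assms(1) that] .
    then show ?thesis
      using admissible_abs_le_1[OF assms(2) that] restrict_in_idx[OF i] finite_subset by blast
  qed
  then have "\<bar>\<Prod>Jl\<in>J. x Jl (restrict i Jl)\<bar> \<le> 1"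
    unfolding abs_prod by (simp add: prod_le_1)
  then have "\<bar>B i * (\<Prod>Jl\<in>J. x Jl (restrict i Jl))\<bar> \<le> \<bar>B i\<bar>"
    by (simp add: abs_mult mult_left_le)
  then show "B i * (\<Prod>Jl\<in>J. x Jl (restrict i Jl)) \<le> \<bar>B i\<bar>" by linarith
qed

lemma pform_le_pnorm:
  assumes "partition_on {..<m} J" "admissible n J x"
  shows "pform n m J B x \<le> pnorm n m J B"
proof -
  have "bdd_above {pform n m J B x | x. admissible n J x}"
    using pform_le_sum_abs[OF assms(1)] by (auto intro!: bdd_aboveI)
  with assms(2) show ?thesis
    unfolding pnorm_eq_Sup_pform by (auto intro: cSup_upper)
qed

lemma pnorm_le:
  assumes "\<And>x. admissible n J x \<Longrightarrow> pform n m J B x \<le> c"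
  shows "pnorm n m J B \<le> c"
proof -
  have "admissible n J (\<lambda>_ _. 0)" by (simp add: admissible_def)
  with assms show ?thesis
    unfolding pnorm_eq_Sup_pform by (auto intro!: cSup_least)
qed

lemma pnorm_cong:
  assumes "\<And>i. i \<in> idx n {..<m} \<Longrightarrow> B i = B' i"
  shows "pnorm n m J B = pnorm n m J B'"
proof -
  have "pform n m J B x = pform n m J B' x" for x unfolding pform_def using assms by simp
  then show ?thesis by (simp add: pnorm_eq_Sup_pform)
qed

lemma pnorm_sum_le:
  assumes "partition_on {..<m} J"
  shows "pnorm n m J (\<lambda>i. \<Sum>s\<in>S. f s i) \<le> (\<Sum>s\<in>S. pnorm n m J (f s))"
proof (rule pnorm_le)
  fix x assume x: "admissible n J x"
  have "pform n m J (\<lambda>i. \<Sum>s\<in>S. f s i) x = (\<Sum>s\<in>S. pform n m J (f s) x)"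
    unfolding pform_def sum_distrib_right by (rule sum.swap)
  also have "\<dots> \<le> (\<Sum>s\<in>S. pnorm n m J (f s))"
    by (rule sum_mono) (rule pform_le_pnorm[OF assms x])
  finally show "pform n m J (\<lambda>i. \<Sum>s\<in>S. f s i) x \<le> (\<Sum>s\<in>S. pnorm n m J (f s))" .
qed

lemma pform_reweight_le_pnorm:
  assumes "partition_on {..<m} J" "admissible n J x"
    and w: "\<And>Jl j. Jl \<in> J \<Longrightarrow> j \<in> idx n Jl \<Longrightarrow> \<bar>w Jl j\<bar> \<le> 1"
  shows "pform n m J (\<lambda>i. B i * (\<Prod>Jl\<in>J. w Jl (restrict i Jl))) x \<le> pnorm n m J B"
proof -
  define x' where "x' = (\<lambda>Jl j. x Jl j * w Jl j)"
  have "pform n m J (\<lambda>i. B i * (\<Prod>Jl\<in>J. w Jl (restrict i Jl))) x = pform n m J B x'"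
    unfolding pform_def x'_def by (simp add: prod.distrib mult_ac)
  moreover have "admissible n J x'"
    unfolding admissible_def
  proof
    fix Jl assume Jl: "Jl \<in> J"
    have "(\<Sum>j\<in>idx n Jl. (x' Jl j)\<^sup>2) \<le> (\<Sum>j\<in>idx n Jl. (x Jl j)\<^sup>2)"
    proof (rule sum_mono)
      fix j assume "j \<in> idx n Jl"
      then have "(w Jl j)\<^sup>2 \<le> 1" using w[OF Jl] by (simp add: abs_square_le_1)
      then show "(x' Jl j)\<^sup>2 \<le> (x Jl j)\<^sup>2"
        by (simp add: x'_def power_mult_distrib mult_left_le)
    qed
    also have "\<dots> \<le> 1" using assms(2) Jl by (auto simp: admissible_def)
    finally show "(\<Sum>j\<in>idx n Jl. (x' Jl j)\<^sup>2) \<le> 1" .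
  qed
  ultimately show ?thesis using pform_le_pnorm[OF assms(1)] by simp
qed

lemma pnorm_uminus_le:
  assumes "partition_on {..<m} J" "0 < m"
  shows "pnorm n m J (\<lambda>i. - B i) \<le> pnorm n m J B"
proof (rule pnorm_le)
  fix x assume x: "admissible n J x"
  obtain J0 where J0: "J0 \<in> J"
    using partition_onD1[OF assms(1)] \<open>0 < m\<close> by blast
  define w where "w = (\<lambda>Jl (j::nat\<Rightarrow>nat). if Jl = J0 then -1 else (1::real))"
  have "(\<Prod>Jl\<in>J. w Jl (restrict i Jl)) = -1" for i
    unfolding w_def using partition_on_lessThan_finite[OF assms(1)] J0 by (simp add: prod.delta)
  then have "pform n m J (\<lambda>i. - B i) x = pform n m J (\<lambda>i. B i * (\<Prod>Jl\<in>J. w Jl (restrict i Jl))) x"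
    by simp
  also have "\<dots> \<le> pnorm n m J B"
    by (rule pform_reweight_le_pnorm[OF assms(1) x]) (simp add: w_def)
  finally show "pform n m J (\<lambda>i. - B i) x \<le> pnorm n m J B" .
qed

lemma pnorm_uminus:
  assumes "partition_on {..<m} J" "0 < m"
  shows "pnorm n m J (\<lambda>i. - B i) = pnorm n m J B"
  using pnorm_uminus_le[OF assms, of n B] pnorm_uminus_le[OF assms, of n "\<lambda>i. - B i"] by simp

section \<open>Equality constraints do not increase partition norms\<close>

definition sign_vectors :: "nat \<Rightarrow> (nat \<Rightarrow> real) set" where
  "sign_vectors n = PiE {..<n} (\<lambda>_. {-1, 1})"

lemma sign_vectors_values: "e \<in> sign_vectors n \<Longrightarrow> a < n \<Longrightarrow> e a = -1 \<or> e a = 1"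
  by (auto simp: sign_vectors_def PiE_iff)

lemma finite_sign_vectors: "finite (sign_vectors n)"
  by (simp add: sign_vectors_def finite_PiE)

lemma card_sign_vectors_pos: "card (sign_vectors n) > 0"
proof -
  have "(\<lambda>k\<in>{..<n}. 1) \<in> sign_vectors n" by (simp add: sign_vectors_def)
  then show ?thesis using finite_sign_vectors card_gt_0_iff by blast
qed

lemma sum_sign_vectors_mult:
  assumes "a < n" "b < n"
  shows "(\<Sum>e\<in>sign_vectors n. e a * e b) = (if a = b then real (card (sign_vectors n)) else 0)"
proof (cases "a = b")
  case True
  have "(\<Sum>e\<in>sign_vectors n. e a * e b) = (\<Sum>e\<in>sign_vectors n. 1)"
    by (rule sum.cong) (use sign_vectors_values assms True in fastforce)+
  then show ?thesis using True by simp
next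
  case False
  define flip where "flip e = e(a := - e a)" for e :: "nat \<Rightarrow> real"
  have flip_in: "flip e \<in> sign_vectors n" if "e \<in> sign_vectors n" for e
    using that assms sign_vectors_values[of e n a]
    by (auto simp: sign_vectors_def PiE_iff flip_def extensional_def)
  have "(\<Sum>e\<in>sign_vectors n. e a * e b) = (\<Sum>e\<in>sign_vectors n. flip e a * flip e b)"
    by (rule sum.reindex_bij_witness[of _ flip flip]) (auto simp: flip_in[unfolded flip_def] flip_def)
  also have "\<dots> = - (\<Sum>e\<in>sign_vectors n. e a * e b)"
    using False by (simp add: flip_def sum_negf)
  finally show ?thesis using False by simp
qed

lemma pnorm_scale_le:
  assumes "partition_on {..<m} J" "0 \<le> c"
  shows "pnorm n m J (\<lambda>i. c * B i) \<le> c * pnorm n m J B"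
proof (rule pnorm_le)
  fix x assume "admissible n J x"
  then have "c * pform n m J B x \<le> c * pnorm n m J B"
    using pform_le_pnorm[OF assms(1)] \<open>0 \<le> c\<close> by (simp add: mult_left_mono)
  then show "pform n m J (\<lambda>i. c * B i) x \<le> c * pnorm n m J B"
    by (simp add: pform_def sum_distrib_left mult.assoc)
qed

lemma pnorm_mult_signs_le:
  assumes J: "partition_on {..<m} J" and uv: "u < m" "v < m" and e: "e \<in> sign_vectors n"
  shows "pnorm n m J (\<lambda>i. B i * (e (i u) * e (i v))) \<le> pnorm n m J B"
proof (rule pnorm_le)
  fix x assume x: "admissible n J x"
  obtain Ju Jv where Ju: "Ju \<in> J" "u \<in> Ju" and Jv: "Jv \<in> J" "v \<in> Jv"
  proof -
    have "u \<in> \<Union>J" "v \<in> \<Union>J" using partition_onD1[OF J] uv by auto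
    then show ?thesis using that by blast
  qed
  define w where "w Jl j = (if Jl = Ju then e (j u) else 1) * (if Jl = Jv then e (j v) else 1)"
    for Jl and j :: "nat \<Rightarrow> nat"
  have "(\<Prod>Jl\<in>J. w Jl (restrict i Jl)) = e (i u) * e (i v)" for i
    using partition_on_lessThan_finite[OF J] Ju Jv
    by (simp add: w_def prod.distrib prod.delta)
  moreover have "\<bar>w Jl j\<bar> \<le> 1" if "j \<in> idx n Jl" for Jl j
  proof -
    have "\<bar>e (j t)\<bar> \<le> 1" if "t \<in> Jl" for t
      using sign_vectors_values[OF e, of "j t"] \<open>j \<in> idx n Jl\<close> that
      by (auto simp: idx_def PiE_iff)
    then show ?thesis using Ju Jv by (auto simp: w_def abs_mult intro: mult_le_one)
  qed
  ultimately show "pform n m J (\<lambda>i. B i * (e (i u) * e (i v))) x \<le> pnorm n m J B"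
    using pform_reweight_le_pnorm[OF J x, of w B] by simp
qed

lemma pnorm_mult_indicator_eq_le:
  assumes J: "partition_on {..<m} J" and uv: "u < m" "v < m"
  shows "pnorm n m J (\<lambda>i. B i * (if i u = i v then 1 else 0)) \<le> pnorm n m J B"
proof -
  define N where "N = real (card (sign_vectors n))"
  have N: "0 < N" using card_sign_vectors_pos by (simp add: N_def)
  have "(if i u = i v then 1 else 0) = (\<Sum>e\<in>sign_vectors n. e (i u) * e (i v)) / N"
    if "i \<in> idx n {..<m}" for i
    using that uv N sum_sign_vectors_mult[of "i u" n "i v"]
    by (auto simp: idx_def PiE_iff N_def)
  then have "pnorm n m J (\<lambda>i. B i * (if i u = i v then 1 else 0)) =
      pnorm n m J (\<lambda>i. \<Sum>e\<in>sign_vectors n. 1 / N * (B i * (e (i u) * e (i v))))"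
    by (intro pnorm_cong) (simp add: sum_distrib_left sum_divide_distrib)
  also have "\<dots> \<le> (\<Sum>e\<in>sign_vectors n. pnorm n m J (\<lambda>i. 1 / N * (B i * (e (i u) * e (i v)))))"
    by (rule pnorm_sum_le[OF J])
  also have "\<dots> \<le> (\<Sum>e\<in>sign_vectors n. 1 / N * pnorm n m J B)"
  proof (rule sum_mono)
    fix e assume "e \<in> sign_vectors n"
    have "pnorm n m J (\<lambda>i. 1 / N * (B i * (e (i u) * e (i v))))
        \<le> 1 / N * pnorm n m J (\<lambda>i. B i * (e (i u) * e (i v)))"
      using N by (intro pnorm_scale_le[OF J]) simp
    also have "\<dots> \<le> 1 / N * pnorm n m J B"
      using N pnorm_mult_signs_le[OF J uv \<open>e \<in> sign_vectors n\<close>] by (simp add: divide_right_mono)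
    finally show "pnorm n m J (\<lambda>i. 1 / N * (B i * (e (i u) * e (i v)))) \<le> 1 / N * pnorm n m J B" .
  qed
  also have "\<dots> = pnorm n m J B" using N by (simp add: N_def)
  finally show ?thesis .
qed

definition pair_mask :: "(nat \<times> nat) set \<Rightarrow> (nat \<Rightarrow> nat) \<Rightarrow> real" where
  "pair_mask G i = (if \<forall>(u, v)\<in>G. i u = i v then 1 else 0)"

lemma pnorm_mult_pair_mask_le:
  assumes J: "partition_on {..<m} J" and G: "G \<subseteq> {..<m} \<times> {..<m}"
  shows "pnorm n m J (\<lambda>i. B i * pair_mask G i) \<le> pnorm n m J B"
proof -
  have "finite G" using G finite_subset by blast
  then show ?thesis using G
  proof (induction G rule: finite_subset_induct)
    case empty then show ?case by (simp add: pair_mask_def)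
  next
    case (insert a F)
    obtain u v where a: "a = (u, v)" by force
    have "(\<lambda>i. B i * pair_mask (insert a F) i) = (\<lambda>i. (B i * pair_mask F i) * (if i u = i v then 1 else 0))"
      by (auto simp: pair_mask_def a)
    moreover have "u < m" "v < m" using insert(2) a by auto
    ultimately show ?case
      using pnorm_mult_indicator_eq_le[OF J, of u v n "\<lambda>i. B i * pair_mask F i"] insert.IH by simp
  qed
qed

lemma pnorm_alternating_mask_sum_le:
  assumes J: "partition_on {..<m} J" "0 < m"
    and G: "\<And>S. S \<in> \<S> \<Longrightarrow> G S \<subseteq> {..<m} \<times> {..<m}"
  shows "pnorm n m J (\<lambda>i. \<Sum>S\<in>\<S>. (-1) ^ k S * (B i * pair_mask (G S) i))
           \<le> card \<S> * pnorm n m J B"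
proof -
  have signed: "pnorm n m J (\<lambda>i. (-1) ^ k * C i) = pnorm n m J C" for k C
    by (cases "even k") (simp_all add: pnorm_uminus[OF J])
  have "pnorm n m J (\<lambda>i. \<Sum>S\<in>\<S>. (-1) ^ k S * (B i * pair_mask (G S) i))
      \<le> (\<Sum>S\<in>\<S>. pnorm n m J (\<lambda>i. (-1) ^ k S * (B i * pair_mask (G S) i)))"
    by (rule pnorm_sum_le[OF J(1)])
  also have "\<dots> = (\<Sum>S\<in>\<S>. pnorm n m J (\<lambda>i. B i * pair_mask (G S) i))"
    by (simp only: signed)
  also have "\<dots> \<le> (\<Sum>S\<in>\<S>. pnorm n m J B)"
    by (rule sum_mono) (rule pnorm_mult_pair_mask_le[OF J(1) G])
  finally show ?thesis by simp
qed

section \<open>Inclusion-exclusion for the indicator of L(K)\<close>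

lemma prod_indicator:
  "finite X \<Longrightarrow> (\<Prod>a\<in>X. if Q a then 1 else 0) = (if \<forall>a\<in>X. Q a then 1 else (0::'a::comm_semiring_1))"
  by (induction X rule: finite_induct) auto

lemma indicator_none_eq_alternating_sum:
  assumes "finite A"
  shows "(if \<forall>a\<in>A. \<not> Q a then 1 else 0) =
    (\<Sum>S\<in>Pow A. (-1) ^ card S * (if \<forall>a\<in>S. Q a then 1 else (0::'a::comm_ring_1)))"
proof -
  define e where "e a = (if Q a then 1 else (0::'a))" for a
  have "(if \<forall>a\<in>A. \<not> Q a then 1 else 0) = (\<Prod>a\<in>A. if \<not> Q a then 1 else (0::'a))"
    by (rule prod_indicator[OF assms, symmetric])
  also have "\<dots> = (\<Prod>a\<in>A. - e a + 1)"
    by (rule prod.cong) (simp_all add: e_def)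
  also have "\<dots> = (\<Sum>S\<in>Pow A. (\<Prod>a\<in>S. - e a) * (\<Prod>a\<in>A-S. 1))"
    by (rule prod_add[OF assms])
  also have "\<dots> = (\<Sum>S\<in>Pow A. (-1) ^ card S * (if \<forall>a\<in>S. Q a then 1 else 0))"
  proof (rule sum.cong)
    fix S assume "S \<in> Pow A"
    then have "finite S" using assms finite_subset by auto
    then show "(\<Prod>a\<in>S. - e a) * (\<Prod>a\<in>A-S. 1) = (-1) ^ card S * (if \<forall>a\<in>S. Q a then 1 else 0)"
      by (simp add: e_def prod_uminus prod_indicator)
  qed simp
  finally show ?thesis .
qed

lemma constant_on_iff: "f constant_on A \<longleftrightarrow> (\<forall>x\<in>A. \<forall>y\<in>A. f x = f y)"
  unfolding constant_on_def by (cases "A = {}") auto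

lemma pair_mask_Union_squares:
  "pair_mask (\<Union>X\<in>F. X \<times> X) i = (if \<forall>X\<in>F. i constant_on X then 1 else 0)"
  by (auto simp: pair_mask_def constant_on_iff)

lemma constant_on_blocks_if_same_block_iff_eq:
  assumes K: "partition_on {..<d} K"
    and L: "\<forall>k<d. \<forall>l<d. i k = i l \<longleftrightarrow> (\<exists>B\<in>K. k \<in> B \<and> l \<in> B)"
  shows "(\<forall>B\<in>K. i constant_on B) \<and> (\<forall>p\<in>{p. p \<subseteq> K \<and> card p = 2}. \<not> i constant_on \<Union>p)"
proof
  have lt: "k < d" if "B \<in> K" "k \<in> B" for B k
    using partition_on_block_subset[OF K] that by blast
  then show "\<forall>B\<in>K. i constant_on B" using L by (auto simp: constant_on_iff)
  show "\<forall>p\<in>{p. p \<subseteq> K \<and> card p = 2}. \<not> i constant_on \<Union>p"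
  proof (intro ballI notI)
    fix p assume p: "p \<in> {p. p \<subseteq> K \<and> card p = 2}" and const: "i constant_on \<Union>p"
    from p obtain B1 B2 where B: "p = {B1, B2}" "B1 \<noteq> B2"
      by (auto simp: card_2_iff)
    then have B12: "B1 \<in> K" "B2 \<in> K" using p by auto
    moreover have "{} \<notin> K" by (rule partition_onD3[OF K])
    ultimately have "B1 \<noteq> {}" "B2 \<noteq> {}" by auto
    then obtain k l where k: "k \<in> B1" and l: "l \<in> B2" by blast
    then have "i k = i l" using const B by (simp add: constant_on_iff)
    then obtain B where B': "B \<in> K" "k \<in> B" "l \<in> B"
      using L lt[OF B12(1) k] lt[OF B12(2) l] by blast
    have "B1 = B" by (rule partition_on_block_unique[OF K B12(1) B'(1) k B'(2)])
    moreover have "B2 = B" by (rule partition_on_block_unique[OF K B12(2) B'(1) l B'(3)])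
    ultimately show False using B(2) by simp
  qed
qed

lemma same_block_iff_eq_if_constant_on_blocks:
  assumes K: "partition_on {..<d} K"
    and blocks: "\<forall>B\<in>K. i constant_on B"
    and pairs: "\<forall>p\<in>{p. p \<subseteq> K \<and> card p = 2}. \<not> i constant_on \<Union>p"
    and kl: "k < d" "l < d"
  shows "i k = i l \<longleftrightarrow> (\<exists>B\<in>K. k \<in> B \<and> l \<in> B)"
proof
  show "i k = i l" if "\<exists>B\<in>K. k \<in> B \<and> l \<in> B"
    using that blocks by (auto simp: constant_on_iff)
next
  assume eq: "i k = i l"
  obtain Bk Bl where B: "Bk \<in> K" "k \<in> Bk" "Bl \<in> K" "l \<in> Bl"
  proof -
    have "k \<in> \<Union>K" "l \<in> \<Union>K" using partition_onD1[OF K] kl by auto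
    then show ?thesis using that by blast
  qed
  have "i x = i k" if "x \<in> Bk \<union> Bl" for x
  proof (cases "x \<in> Bk")
    case True
    then show ?thesis using blocks B(1,2) unfolding constant_on_iff by blast
  next
    case False
    then have "i x = i l" using that blocks B(3,4) unfolding constant_on_iff by blast
    with eq show ?thesis by simp
  qed
  then have "i constant_on \<Union>{Bk, Bl}" unfolding constant_on_def by auto
  then have "{Bk, Bl} \<notin> {p. p \<subseteq> K \<and> card p = 2}" using pairs by blast
  then have "Bk = Bl" using B by (auto simp: card_2_iff)
  then show "\<exists>B\<in>K. k \<in> B \<and> l \<in> B" using B by blast
qed

lemma Lset_iff_constant_on_blocks:
  assumes K: "partition_on {..<d} K" and i: "i \<in> idx n {..<d}"
  shows "i \<in> Lset n d K \<longleftrightarrow>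
    (\<forall>B\<in>K. i constant_on B) \<and> (\<forall>p\<in>{p. p \<subseteq> K \<and> card p = 2}. \<not> i constant_on \<Union>p)"
    (is "_ \<longleftrightarrow> ?blocks \<and> ?pairs")
proof -
  have "(\<forall>k<d. \<forall>l<d. i k = i l \<longleftrightarrow> (\<exists>B\<in>K. k \<in> B \<and> l \<in> B)) \<longleftrightarrow> ?blocks \<and> ?pairs"
  proof
    show "?blocks \<and> ?pairs" if "\<forall>k<d. \<forall>l<d. i k = i l \<longleftrightarrow> (\<exists>B\<in>K. k \<in> B \<and> l \<in> B)"
      using constant_on_blocks_if_same_block_iff_eq[OF K that] .
    show "\<forall>k<d. \<forall>l<d. i k = i l \<longleftrightarrow> (\<exists>B\<in>K. k \<in> B \<and> l \<in> B)" if "?blocks \<and> ?pairs"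
      using same_block_iff_eq_if_constant_on_blocks[OF K conjunct1[OF that] conjunct2[OF that]]
      by simp
  qed
  then show ?thesis using i by (simp add: Lset_def)
qed

definition block_constraints :: "nat set set \<Rightarrow> nat set set set \<Rightarrow> (nat \<times> nat) set" where
  "block_constraints K S = (\<Union>X\<in>K \<union> Union ` S. X \<times> X)"

lemma block_constraints_subset:
  assumes "partition_on {..<d} K" "\<forall>p\<in>S. p \<subseteq> K"
  shows "block_constraints K S \<subseteq> {..<d} \<times> {..<d}"
  using partition_on_block_subset[OF assms(1)] assms(2)
  unfolding block_constraints_def by blast

lemma ind_tensor_Lset_eq_alternating_sum:
  assumes K: "partition_on {..<d} K" and i: "i \<in> idx n {..<d}"
  shows "ind_tensor (Lset n d K) i =
    (\<Sum>S\<in>Pow {p. p \<subseteq> K \<and> card p = 2}. (-1) ^ card S * pair_mask (block_constraints K S) i)"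
proof -
  let ?P = "{p. p \<subseteq> K \<and> card p = 2}"
  let ?blocks = "if \<forall>B\<in>K. i constant_on B then 1 else 0 :: real"
  have "finite ?P" using partition_on_lessThan_finite[OF K] by simp
  have "ind_tensor (Lset n d K) i = ?blocks * (if \<forall>p\<in>?P. \<not> i constant_on \<Union>p then 1 else 0)"
    by (simp add: ind_tensor_def Lset_iff_constant_on_blocks[OF K i])
  also have "\<dots> = ?blocks * (\<Sum>S\<in>Pow ?P. (-1) ^ card S * (if \<forall>p\<in>S. i constant_on \<Union>p then 1 else 0))"
    by (simp only: indicator_none_eq_alternating_sum[OF \<open>finite ?P\<close>])
  also have "\<dots> = (\<Sum>S\<in>Pow ?P. (-1) ^ card S * pair_mask (block_constraints K S) i)"
    unfolding sum_distrib_left block_constraints_def pair_mask_Union_squares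
    by (rule sum.cong) auto
  finally show ?thesis .
qed

lemma e_q_hadamard: "e_q q d (hadamard A M) j = e_q q d A j * M (\<lambda>k\<in>{..<d}. j (k * q))"
  by (auto simp: e_q_def hadamard_def)

lemma diagonal_restrict_in_idx:
  "0 < q \<Longrightarrow> j \<in> idx n {..<q * d} \<Longrightarrow> (\<lambda>k\<in>{..<d}. j (k * q)) \<in> idx n {..<d}"
  by (auto simp: idx_def PiE_iff)

lemma pair_mask_diagonal_restrict:
  assumes "G \<subseteq> {..<d} \<times> {..<d}"
  shows "pair_mask G (\<lambda>k\<in>{..<d}. j (k * q)) = pair_mask (map_prod (\<lambda>k. k * q) (\<lambda>k. k * q) ` G) j"
  using assms by (force simp: pair_mask_def)

lemma e_q_hadamard_ind_tensor_Lset: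
  assumes "0 < q" "partition_on {..<d} K" "j \<in> idx n {..<q * d}"
  shows "e_q q d (hadamard A (ind_tensor (Lset n d K))) j =
    (\<Sum>S\<in>Pow {p. p \<subseteq> K \<and> card p = 2}. (-1) ^ card S *
      (e_q q d A j * pair_mask (map_prod (\<lambda>k. k * q) (\<lambda>k. k * q) ` block_constraints K S) j))"
proof -
  have "pair_mask (block_constraints K S) (\<lambda>k\<in>{..<d}. j (k * q)) =
      pair_mask (map_prod (\<lambda>k. k * q) (\<lambda>k. k * q) ` block_constraints K S) j"
    if "S \<in> Pow {p. p \<subseteq> K \<and> card p = 2}" for S
    using that block_constraints_subset[OF assms(2), of S] by (auto intro: pair_mask_diagonal_restrict)
  then show ?thesis
    by (simp add: e_q_hadamard ind_tensor_Lset_eq_alternating_sum[OF assms(2) diagonal_restrict_in_idx[OF assms(1,3)]]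
        sum_distrib_left mult.left_commute)
qed

theorem lemma5p2:
  fixes n q d :: nat and J K :: "nat set set" and A :: "(nat \<Rightarrow> nat) \<Rightarrow> real"
  assumes "q \<ge> 1" and "d \<ge> 1"
    and "partition_on {..<q*d} J"
    and "partition_on {..<d} K"
  shows "qnorm n q d J (hadamard A (ind_tensor (Lset n d K)))
           \<le> 2 ^ (card K * (card K - 1) div 2) * qnorm n q d J A"
proof -
  let ?P = "{p. p \<subseteq> K \<and> card p = 2}"
  define G where "G S = map_prod (\<lambda>k. k * q) (\<lambda>k. k * q) ` block_constraints K S" for S
  have G: "G S \<subseteq> {..<q * d} \<times> {..<q * d}" if "S \<in> Pow ?P" for S
    using block_constraints_subset[OF assms(4), of S] that \<open>q \<ge> 1\<close>
    by (fastforce simp: G_def)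
  have "qnorm n q d J (hadamard A (ind_tensor (Lset n d K))) =
      pnorm n (q * d) J (\<lambda>j. \<Sum>S\<in>Pow ?P. (-1) ^ card S * (e_q q d A j * pair_mask (G S) j))"
    unfolding qnorm_def G_def using assms(1,4)
    by (intro pnorm_cong e_q_hadamard_ind_tensor_Lset) auto
  also have "\<dots> \<le> card (Pow ?P) * qnorm n q d J A"
    unfolding qnorm_def using assms G by (intro pnorm_alternating_mask_sum_le) auto
  also have "card (Pow ?P) = 2 ^ (card K * (card K - 1) div 2)"
    using partition_on_lessThan_finite[OF assms(4)] by (simp add: card_Pow n_subsets choose_two)
  finally show ?thesis by simp
qed

end
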